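(* Let $X$ be a nonempty set and $G\le S_X$. There is a one-to-one correspondence between racks (resp. quandles) $(X,* )$ satisfying $\mathrm{LMlt}(X,* )=G$ and rack envelopes (resp. quandle envelopes) of the form $(G,\Lambda)$. Given such a rack/quandle $(X,* )$, the corresponding envelope is $\mathbf E(X,* )=(G,(L_x:x\in X/G))$; given a rack/quandle envelope $(G,\Lambda)$, the corresponding rack/quandle is $\mathbf R(G,\Lambda)$; these two maps are mutually inverse.
   Context: Permutations act on the right ($xf$ is the image of $x$ under $f$; $fg$ means $f$ first, then $g$); $g^f=f^{-1}gf$, $f^G=\{f^g:g\in G\}$. For $G\le S_X$, $xG$ is the orbit of $x$, $G_x$ its stabilizer, $X/G$ a fixed complete set of orbit representatives; $C_G(H)$ is the centralizer, $Z(H)$ the center. A left quasigroup is a groupoid $(X,* )$ whose left translations $L_x$ ($yL_x=x*y$) are bijections; a rack is a left quasigroup with $x*(y*z)=(x*y)*(x*z)$; a quandle is a rack with $x*x=x$; $\mathrm{LMlt}(X,* )=\langle L_x:x\in X\rangle$. A pair $(G,(\lambda_x:x\in X/G))$ with $G\le S_X$ is a rack folder (resp. quandle folder) if $\lambda_x\in C_G(G_x)$ (resp. $\lambda_x\in Z(G_x)$) for every $x\in X/G$; it is a rack envelope (resp. quandle envelope) if moreover $\langle\bigcup_{x\in X/G}\lambda_x^G\rangle=G$. For a rack folder $(G,\Lambda)$, $\Lambda=(\lambda_x:x\in X/G)$, the rack $\mathbf R(G,\Lambda)=(X,* )$ is defined by $L_y=(\lambda_x)^{g_y}$ whenever $x\in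 X/G$, $y\in xG$ and $g_y\in G$ satisfies $xg_y=y$ (this is independent of the choice of $g_y$). *)

theory Defs
  imports "HOL-Combinatorics.Permutations"
begin

text \<open>Right-action conventions of the paper: x f = f x, and the product fg (f first, then g)
  is g \<circ> f.  Hence the conjugate f^g = g^-1 f g is g \<circ> f \<circ> inv g.\<close>

definition conj_perm :: "('a \<Rightarrow> 'a) \<Rightarrow> ('a \<Rightarrow> 'a) \<Rightarrow> ('a \<Rightarrow> 'a)" where
  "conj_perm f g = g \<circ> f \<circ> inv g"

definition perm_subgroup :: "'a set \<Rightarrow> ('a \<Rightarrow> 'a) set \<Rightarrow> bool" where
  "perm_subgroup X G \<longleftrightarrow> G \<subseteq> {f. f permutes X} \<and> id \<in> G
     \<and> (\<forall>f\<in>G. \<forall>g\<in>G. g \<circ> f \<in> G) \<and> (\<forall>f\<in>G. inv f \<in> G)"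

inductive_set gen_perm :: "('a \<Rightarrow> 'a) set \<Rightarrow> ('a \<Rightarrow> 'a) set" for S where
  gen_id: "id \<in> gen_perm S"
| gen_base: "f \<in> S \<Longrightarrow> f \<in> gen_perm S"
| gen_comp: "f \<in> gen_perm S \<Longrightarrow> g \<in> gen_perm S \<Longrightarrow> g \<circ> f \<in> gen_perm S"
| gen_inv: "f \<in> gen_perm S \<Longrightarrow> inv f \<in> gen_perm S"

definition orbit :: "('a \<Rightarrow> 'a) set \<Rightarrow> 'a \<Rightarrow> 'a set" where
  "orbit G x = {g x | g. g \<in> G}"

definition stabilizer :: "('a \<Rightarrow> 'a) set \<Rightarrow> 'a \<Rightarrow> ('a \<Rightarrow> 'a) set" where
  "stabilizer G x = {g \<in> G. g x = x}"

definition centralizer :: "('a \<Rightarrow> 'a) set \<Rightarrow> ('a \<Rightarrow> 'a) set \<Rightarrow> ('a \<Rightarrow> 'a) set" where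
  "centralizer G H = {g \<in> G. \<forall>h\<in>H. g \<circ> h = h \<circ> g}"

definition center :: "('a \<Rightarrow> 'a) set \<Rightarrow> ('a \<Rightarrow> 'a) set" where
  "center H = centralizer H H"

definition orbit_reps :: "'a set \<Rightarrow> ('a \<Rightarrow> 'a) set \<Rightarrow> 'a set \<Rightarrow> bool" where
  "orbit_reps X G T \<longleftrightarrow> T \<subseteq> X \<and> (\<forall>y\<in>X. \<exists>!x. x \<in> T \<and> y \<in> orbit G x)"

text \<open>Families (\<lambda>_x : x \<in> X/G) are functions on T, normalised to id outside T.\<close>
definition rack_folder :: "'a set \<Rightarrow> ('a \<Rightarrow> 'a) set \<Rightarrow> 'a set \<Rightarrow> ('a \<Rightarrow> 'a \<Rightarrow> 'a) \<Rightarrow> bool" where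
  "rack_folder X G T \<Lambda> \<longleftrightarrow> perm_subgroup X G
     \<and> (\<forall>x\<in>T. \<Lambda> x \<in> centralizer G (stabilizer G x)) \<and> (\<forall>x. x \<notin> T \<longrightarrow> \<Lambda> x = id)"

definition quandle_folder :: "'a set \<Rightarrow> ('a \<Rightarrow> 'a) set \<Rightarrow> 'a set \<Rightarrow> ('a \<Rightarrow> 'a \<Rightarrow> 'a) \<Rightarrow> bool" where
  "quandle_folder X G T \<Lambda> \<longleftrightarrow> perm_subgroup X G
     \<and> (\<forall>x\<in>T. \<Lambda> x \<in> center (stabilizer G x)) \<and> (\<forall>x. x \<notin> T \<longrightarrow> \<Lambda> x = id)"

definition envelope_gen :: "('a \<Rightarrow> 'a) set \<Rightarrow> 'a set \<Rightarrow> ('a \<Rightarrow> 'a \<Rightarrow> 'a) \<Rightarrow> bool" where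
  "envelope_gen G T \<Lambda> \<longleftrightarrow> gen_perm (\<Union>x\<in>T. {conj_perm (\<Lambda> x) g | g. g \<in> G}) = G"

definition rack_envelope :: "'a set \<Rightarrow> ('a \<Rightarrow> 'a) set \<Rightarrow> 'a set \<Rightarrow> ('a \<Rightarrow> 'a \<Rightarrow> 'a) \<Rightarrow> bool" where
  "rack_envelope X G T \<Lambda> \<longleftrightarrow> rack_folder X G T \<Lambda> \<and> envelope_gen G T \<Lambda>"

definition quandle_envelope :: "'a set \<Rightarrow> ('a \<Rightarrow> 'a) set \<Rightarrow> 'a set \<Rightarrow> ('a \<Rightarrow> 'a \<Rightarrow> 'a) \<Rightarrow> bool" where
  "quandle_envelope X G T \<Lambda> \<longleftrightarrow> quandle_folder X G T \<Lambda> \<and> envelope_gen G T \<Lambda>"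

text \<open>Groupoids on X: binary operations, values outside X \<times> X are normalised to undefined.\<close>
definition op_on :: "'a set \<Rightarrow> ('a \<Rightarrow> 'a \<Rightarrow> 'a) \<Rightarrow> bool" where
  "op_on X m \<longleftrightarrow> (\<forall>x\<in>X. \<forall>y\<in>X. m x y \<in> X) \<and> (\<forall>x y. \<not> (x \<in> X \<and> y \<in> X) \<longrightarrow> m x y = undefined)"

definition Ltr :: "'a set \<Rightarrow> ('a \<Rightarrow> 'a \<Rightarrow> 'a) \<Rightarrow> 'a \<Rightarrow> ('a \<Rightarrow> 'a)" where
  "Ltr X m x = (\<lambda>y. if y \<in> X then m x y else y)"

definition left_quasigroup :: "'a set \<Rightarrow> ('a \<Rightarrow> 'a \<Rightarrow> 'a) \<Rightarrow> bool" where
  "left_quasigroup X m \<longleftrightarrow> op_on X m \<and> (\<forall>x\<in>X. bij_betw (m x) X X)"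

definition rack :: "'a set \<Rightarrow> ('a \<Rightarrow> 'a \<Rightarrow> 'a) \<Rightarrow> bool" where
  "rack X m \<longleftrightarrow> left_quasigroup X m
     \<and> (\<forall>x\<in>X. \<forall>y\<in>X. \<forall>z\<in>X. m x (m y z) = m (m x y) (m x z))"

definition quandle :: "'a set \<Rightarrow> ('a \<Rightarrow> 'a \<Rightarrow> 'a) \<Rightarrow> bool" where
  "quandle X m \<longleftrightarrow> rack X m \<and> (\<forall>x\<in>X. m x x = x)"

definition LMlt :: "'a set \<Rightarrow> ('a \<Rightarrow> 'a \<Rightarrow> 'a) \<Rightarrow> ('a \<Rightarrow> 'a) set" where
  "LMlt X m = gen_perm {Ltr X m x | x. x \<in> X}"

text \<open>E(X,*) = (LMlt, (L_x : x \<in> X/G)).\<close>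
definition E_map :: "'a set \<Rightarrow> 'a set \<Rightarrow> ('a \<Rightarrow> 'a \<Rightarrow> 'a) \<Rightarrow> ('a \<Rightarrow> 'a \<Rightarrow> 'a)" where
  "E_map X T m = (\<lambda>x. if x \<in> T then Ltr X m x else id)"

text \<open>R(G,\<Lambda>): L_y = (\<lambda>_x)^(g_y) where x \<in> T, y \<in> xG, x g_y = y.\<close>
definition rep_of :: "('a \<Rightarrow> 'a) set \<Rightarrow> 'a set \<Rightarrow> 'a \<Rightarrow> 'a" where
  "rep_of G T y = (THE x. x \<in> T \<and> y \<in> orbit G x)"

definition R_map :: "'a set \<Rightarrow> ('a \<Rightarrow> 'a) set \<Rightarrow> 'a set \<Rightarrow> ('a \<Rightarrow> 'a \<Rightarrow> 'a) \<Rightarrow> ('a \<Rightarrow> 'a \<Rightarrow> 'a)" where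
  "R_map X G T \<Lambda> = (\<lambda>y z. if y \<in> X \<and> z \<in> X then
      (let x = rep_of G T y; g = (SOME g. g \<in> G \<and> g x = y) in conj_perm (\<Lambda> x) g z)
    else undefined)"

end

theory Submission imports Defs begin

text \<open>Every element of LMlt(X,*) is an automorphism of (X,*), so L_x^g = L_(xg). Hence L_x commutes
  with the stabiliser of x (and lies in it when x*x = x), and the family of all L_y is recovered
  from the L_x at orbit representatives: E(X,*) is an envelope and R(E(X,*)) = (X,*).
  Conversely, for a folder, \<lambda>_x^g depends only on xg because \<lambda>_x centralises G_x. The
  translations L_(xg) = \<lambda>_x^g of R(G,\<Lambda>) satisfy L_y^h = L_(yh) for h in G, which is
  left distributivity; they are exactly the conjugates of the envelope condition, so they generate
  G; and L_x = \<lambda>_x at representatives, i.e. E(R(G,\<Lambda>)) = (G,\<Lambda>).\<close>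

lemma perm_subgroup_permutes: "perm_subgroup X G \<Longrightarrow> g \<in> G \<Longrightarrow> g permutes X"
  unfolding perm_subgroup_def by blast

lemma perm_subgroup_comp: "perm_subgroup X G \<Longrightarrow> f \<in> G \<Longrightarrow> g \<in> G \<Longrightarrow> g \<circ> f \<in> G"
  unfolding perm_subgroup_def by blast

lemma perm_subgroup_inv: "perm_subgroup X G \<Longrightarrow> f \<in> G \<Longrightarrow> inv f \<in> G"
  unfolding perm_subgroup_def by blast

lemma perm_subgroup_id: "perm_subgroup X G \<Longrightarrow> id \<in> G"
  unfolding perm_subgroup_def by blast

lemma conj_perm_id [simp]: "conj_perm f id = f"
  unfolding conj_perm_def by simp

lemma conj_perm_comp: "bij g \<Longrightarrow> bij h \<Longrightarrow> conj_perm f (h \<circ> g) = h \<circ> conj_perm f g \<circ> inv h"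
  unfolding conj_perm_def by (simp add: o_inv_distrib o_assoc)

lemma conj_perm_eq_self_iff: "bij k \<Longrightarrow> conj_perm f k = f \<longleftrightarrow> f \<circ> k = k \<circ> f"
  unfolding conj_perm_def
  by (metis bij_is_inj bij_is_surj comp_id inj_iff surj_iff o_assoc)

lemma conj_perm_in_subgroup: "perm_subgroup X G \<Longrightarrow> f \<in> G \<Longrightarrow> g \<in> G \<Longrightarrow> conj_perm f g \<in> G"
  unfolding conj_perm_def by (meson perm_subgroup_comp perm_subgroup_inv)

lemma conj_perm_fixes: "g permutes X \<Longrightarrow> f x = x \<Longrightarrow> conj_perm f g (g x) = g x"
  unfolding conj_perm_def by (simp add: permutes_inverses(2))

lemma conj_perm_stabilizer_independent:
  assumes G: "perm_subgroup X G" and f: "f \<in> centralizer G (stabilizer G x)"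
    and "g \<in> G" "h \<in> G" "g x = h x"
  shows "conj_perm f g = conj_perm f h"
proof -
  define k where "k = inv h \<circ> g"
  have h: "h permutes X" using G \<open>h \<in> G\<close> by (rule perm_subgroup_permutes)
  have "k \<in> stabilizer G x"
    unfolding stabilizer_def k_def
    using assms(3-5) perm_subgroup_comp[OF G] perm_subgroup_inv[OF G] permutes_inverses(2)[OF h]
    by auto
  then have k: "k \<in> G" and "f \<circ> k = k \<circ> f"
    using f unfolding centralizer_def stabilizer_def by auto
  then have fk: "conj_perm f k = f"
    using conj_perm_eq_self_iff perm_subgroup_permutes[OF G] permutes_bij by blast
  have "g = h \<circ> k"
    unfolding k_def using permutes_inv_o(1)[OF h] by (simp add: o_assoc)
  then have "conj_perm f g = h \<circ> conj_perm f k \<circ> inv h"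
    using conj_perm_comp perm_subgroup_permutes[OF G k] h permutes_bij by blast
  also have "\<dots> = conj_perm f h" unfolding fk by (simp add: conj_perm_def)
  finally show ?thesis .
qed

lemma orbit_reps_subset: "orbit_reps X G T \<Longrightarrow> T \<subseteq> X"
  unfolding orbit_reps_def by blast

lemma orbit_reps_cover:
  assumes "orbit_reps X G T" "y \<in> X"
  obtains x g where "x \<in> T" "g \<in> G" "y = g x"
proof -
  have "\<exists>x. x \<in> T \<and> y \<in> orbit G x" using assms unfolding orbit_reps_def by blast
  then show thesis using that unfolding orbit_def by blast
qed

lemma orbit_reps_image:
  "perm_subgroup X G \<Longrightarrow> orbit_reps X G T \<Longrightarrow> x \<in> T \<Longrightarrow> g \<in> G \<Longrightarrow> g x \<in> X"
  by (meson orbit_reps_subset perm_subgroup_permutes permutes_in_image subsetD)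

lemma rep_of_image:
  assumes "perm_subgroup X G" "orbit_reps X G T" "x \<in> T" "g \<in> G"
  shows "rep_of G T (g x) = x"
proof -
  have "\<exists>!x'. x' \<in> T \<and> g x \<in> orbit G x'"
    using assms(2) orbit_reps_image[OF assms] unfolding orbit_reps_def by blast
  moreover have "x \<in> T \<and> g x \<in> orbit G x" using assms(3,4) unfolding orbit_def by blast
  ultimately show ?thesis unfolding rep_of_def by (rule the1_equality)
qed

lemma Ltr_eq: "y \<in> X \<Longrightarrow> Ltr X m x y = m x y"
  unfolding Ltr_def by simp

lemma Ltr_permutes: "left_quasigroup X m \<Longrightarrow> x \<in> X \<Longrightarrow> Ltr X m x permutes X"
  unfolding left_quasigroup_def
  by (rule bij_imp_permutes) (auto simp: Ltr_def cong: bij_betw_cong)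

lemma rackI:
  assumes op: "op_on X m" and perm: "\<And>x. x \<in> X \<Longrightarrow> Ltr X m x permutes X"
    and conj: "\<And>x y. x \<in> X \<Longrightarrow> y \<in> X \<Longrightarrow> conj_perm (Ltr X m y) (Ltr X m x) = Ltr X m (m x y)"
  shows "rack X m"
  unfolding rack_def left_quasigroup_def
proof (intro conjI ballI op)
  fix x assume "x \<in> X"
  then show "bij_betw (m x) X X"
    using permutes_imp_bij[OF perm] by (simp add: Ltr_def cong: bij_betw_cong)
next
  fix x y z assume xyz: "x \<in> X" "y \<in> X" "z \<in> X"
  then have closed: "m y z \<in> X" "m x z \<in> X" using op unfolding op_on_def by auto
  have "inv (Ltr X m x) (m x z) = z"
    using permutes_inverses(2)[OF perm[OF \<open>x \<in> X\<close>], of z] xyz by (simp add: Ltr_eq)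
  then have "m x (m y z) = conj_perm (Ltr X m y) (Ltr X m x) (Ltr X m x z)"
    unfolding conj_perm_def using xyz closed by (simp add: Ltr_eq)
  also have "\<dots> = m (m x y) (m x z)"
    using xyz closed by (simp add: conj Ltr_eq)
  finally show "m x (m y z) = m (m x y) (m x z)" .
qed

definition automorphism :: "'a set \<Rightarrow> ('a \<Rightarrow> 'a \<Rightarrow> 'a) \<Rightarrow> ('a \<Rightarrow> 'a) \<Rightarrow> bool" where
  "automorphism X m g \<longleftrightarrow> g permutes X \<and> (\<forall>a\<in>X. \<forall>b\<in>X. g (m a b) = m (g a) (g b))"

lemma automorphism_id: "automorphism X m id"
  unfolding automorphism_def by (simp add: permutes_id)

lemma automorphism_comp: "automorphism X m f \<Longrightarrow> automorphism X m g \<Longrightarrow> automorphism X m (g \<circ> f)"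
  unfolding automorphism_def by (simp add: permutes_compose permutes_in_image)

lemma automorphism_inv:
  assumes "automorphism X m f" shows "automorphism X m (inv f)"
proof -
  have f: "f permutes X" and hom: "\<forall>a\<in>X. \<forall>b\<in>X. f (m a b) = m (f a) (f b)"
    using assms unfolding automorphism_def by auto
  have "inv f (m a b) = m (inv f a) (inv f b)" if "a \<in> X" "b \<in> X" for a b
  proof -
    have "inv f a \<in> X" "inv f b \<in> X"
      using that permutes_in_image[OF permutes_inv[OF f]] by auto
    then have "f (m (inv f a) (inv f b)) = m a b"
      using hom by (simp add: permutes_inverses(1)[OF f])
    then show ?thesis by (metis permutes_inverses(2)[OF f])
  qed
  then show ?thesis unfolding automorphism_def using permutes_inv[OF f] by blast
qed

lemma automorphism_Ltr:
  assumes "rack X m" "x \<in> X" shows "automorphism X m (Ltr X m x)"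
proof -
  have lq: "left_quasigroup X m"
    and "\<forall>a\<in>X. \<forall>b\<in>X. m x (m a b) = m (m x a) (m x b)"
    using assms unfolding rack_def by auto
  moreover have "\<forall>a\<in>X. \<forall>b\<in>X. m a b \<in> X"
    using lq unfolding left_quasigroup_def op_on_def by blast
  ultimately show ?thesis
    unfolding automorphism_def using Ltr_permutes[OF lq assms(2)] by (simp add: Ltr_eq)
qed

lemma automorphism_LMlt:
  assumes "rack X m" "g \<in> LMlt X m" shows "automorphism X m g"
  using assms(2) unfolding LMlt_def
  by (induction rule: gen_perm.induct)
     (blast intro: automorphism_id automorphism_comp automorphism_inv automorphism_Ltr assms(1))+

lemma perm_subgroup_LMlt: "rack X m \<Longrightarrow> perm_subgroup X (LMlt X m)"
  using automorphism_LMlt unfolding perm_subgroup_def automorphism_def LMlt_def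
  by (auto intro: gen_perm.intros)

lemma Ltr_in_LMlt: "x \<in> X \<Longrightarrow> Ltr X m x \<in> LMlt X m"
  unfolding LMlt_def by (auto intro: gen_base)

lemma conj_perm_Ltr_automorphism:
  assumes "automorphism X m g" "x \<in> X"
  shows "conj_perm (Ltr X m x) g = Ltr X m (g x)"
proof
  fix z
  have g: "g permutes X" and hom: "\<forall>a\<in>X. \<forall>b\<in>X. g (m a b) = m (g a) (g b)"
    using assms(1) unfolding automorphism_def by auto
  show "conj_perm (Ltr X m x) g z = Ltr X m (g x) z"
    using assms(2) hom permutes_inverses[OF g] permutes_in_image[OF permutes_inv[OF g]]
      permutes_not_in[OF g] permutes_not_in[OF permutes_inv[OF g]]
    unfolding conj_perm_def Ltr_def by auto
qed

lemma center_stabilizer: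
  "center (stabilizer G x) = {f \<in> centralizer G (stabilizer G x). f x = x}"
  unfolding center_def centralizer_def stabilizer_def by auto

lemma quandle_folder_iff:
  "quandle_folder X G T \<Lambda> \<longleftrightarrow> rack_folder X G T \<Lambda> \<and> (\<forall>x\<in>T. \<Lambda> x x = x)"
  unfolding quandle_folder_def rack_folder_def center_stabilizer by blast

lemma rack_folder_perm_subgroup: "rack_folder X G T \<Lambda> \<Longrightarrow> perm_subgroup X G"
  unfolding rack_folder_def by blast

lemma rack_folder_centralizer:
  "rack_folder X G T \<Lambda> \<Longrightarrow> x \<in> T \<Longrightarrow> \<Lambda> x \<in> centralizer G (stabilizer G x)"
  unfolding rack_folder_def by blast

context
  fixes X G T \<Lambda>
  assumes folder: "rack_folder X G T \<Lambda>" and reps: "orbit_reps X G T"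
begin

private lemmas folder_perm_subgroup = rack_folder_perm_subgroup[OF folder]
private lemmas folder_centralizer = rack_folder_centralizer[OF folder]

private lemma folder_in_subgroup: "x \<in> T \<Longrightarrow> \<Lambda> x \<in> G"
  using folder_centralizer unfolding centralizer_def by blast

(* R_map picks some g' with g' x = g x, and the folder condition makes the choice irrelevant. *)
lemma R_map_orbit:
  assumes "x \<in> T" "g \<in> G" "z \<in> X"
  shows "R_map X G T \<Lambda> (g x) z = conj_perm (\<Lambda> x) g z"
proof -
  define g' where "g' = (SOME g'. g' \<in> G \<and> g' x = g x)"
  have g': "g' \<in> G \<and> g' x = g x"
    unfolding g'_def by (rule someI[of _ g]) (use assms in blast)
  have "R_map X G T \<Lambda> (g x) z = conj_perm (\<Lambda> x) g' z"
    using assms orbit_reps_image[OF folder_perm_subgroup reps]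
      rep_of_image[OF folder_perm_subgroup reps]
    unfolding R_map_def by (simp add: g'_def Let_def)
  also have "\<dots> = conj_perm (\<Lambda> x) g z"
    using conj_perm_stabilizer_independent[OF folder_perm_subgroup folder_centralizer] assms g'
    by metis
  finally show ?thesis .
qed

lemma Ltr_R_map:
  "x \<in> T \<Longrightarrow> g \<in> G \<Longrightarrow> Ltr X (R_map X G T \<Lambda>) (g x) = conj_perm (\<Lambda> x) g"
  using R_map_orbit permutes_not_in perm_subgroup_permutes[OF folder_perm_subgroup
      conj_perm_in_subgroup[OF folder_perm_subgroup folder_in_subgroup]]
  unfolding Ltr_def by fastforce

lemma Ltr_R_map_in_subgroup: "y \<in> X \<Longrightarrow> Ltr X (R_map X G T \<Lambda>) y \<in> G"
  by (metis orbit_reps_cover[OF reps] Ltr_R_map conj_perm_in_subgroup folder_perm_subgroup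
      folder_in_subgroup)

lemma conj_perm_Ltr_R_map:
  assumes "h \<in> G" "y \<in> X"
  shows "conj_perm (Ltr X (R_map X G T \<Lambda>) y) h = Ltr X (R_map X G T \<Lambda>) (h y)"
proof -
  obtain x g where x: "x \<in> T" and g: "g \<in> G" and y: "y = g x"
    using orbit_reps_cover[OF reps assms(2)] .
  have "conj_perm (Ltr X (R_map X G T \<Lambda>) y) h = h \<circ> conj_perm (\<Lambda> x) g \<circ> inv h"
    unfolding y Ltr_R_map[OF x g] conj_perm_def ..
  also have "\<dots> = conj_perm (\<Lambda> x) (h \<circ> g)"
    using conj_perm_comp perm_subgroup_permutes[OF folder_perm_subgroup] permutes_bij g assms(1)
    by metis
  also have "\<dots> = Ltr X (R_map X G T \<Lambda>) (h y)"
    using Ltr_R_map[OF x perm_subgroup_comp[OF folder_perm_subgroup g assms(1)]] y by simp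
  finally show ?thesis .
qed

lemma rack_R_map: "rack X (R_map X G T \<Lambda>)"
proof (rule rackI)
  show perm: "Ltr X (R_map X G T \<Lambda>) y permutes X" if "y \<in> X" for y
    using perm_subgroup_permutes[OF folder_perm_subgroup Ltr_R_map_in_subgroup[OF that]] .
  show "op_on X (R_map X G T \<Lambda>)"
    unfolding op_on_def
  proof (intro conjI ballI allI impI)
    fix x y assume "x \<in> X" "y \<in> X"
    then show "R_map X G T \<Lambda> x y \<in> X"
      using permutes_in_image[OF perm] by (metis Ltr_eq)
  qed (auto simp: R_map_def)
  fix x y assume "x \<in> X" "y \<in> X"
  then show "conj_perm (Ltr X (R_map X G T \<Lambda>) y) (Ltr X (R_map X G T \<Lambda>) x)
      = Ltr X (R_map X G T \<Lambda>) (R_map X G T \<Lambda> x y)"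
    using conj_perm_Ltr_R_map[OF Ltr_R_map_in_subgroup] by (simp add: Ltr_eq)
qed

lemma Ltr_R_map_range:
  "{Ltr X (R_map X G T \<Lambda>) y | y. y \<in> X} = (\<Union>x\<in>T. {conj_perm (\<Lambda> x) g | g. g \<in> G})"
proof (intro equalityI subsetI)
  fix f assume "f \<in> {Ltr X (R_map X G T \<Lambda>) y | y. y \<in> X}"
  then obtain y where "y \<in> X" "f = Ltr X (R_map X G T \<Lambda>) y" by blast
  moreover obtain x g where "x \<in> T" "g \<in> G" "y = g x"
    using orbit_reps_cover[OF reps \<open>y \<in> X\<close>] .
  ultimately show "f \<in> (\<Union>x\<in>T. {conj_perm (\<Lambda> x) g | g. g \<in> G})"
    using Ltr_R_map[of x g] by blast
next
  fix f assume "f \<in> (\<Union>x\<in>T. {conj_perm (\<Lambda> x) g | g. g \<in> G})"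
  then obtain x g where "x \<in> T" "g \<in> G" "f = conj_perm (\<Lambda> x) g" by blast
  then show "f \<in> {Ltr X (R_map X G T \<Lambda>) y | y. y \<in> X}"
    using Ltr_R_map[of x g] orbit_reps_image[OF folder_perm_subgroup reps, of x g]
    by (auto intro!: exI[of _ "g x"])
qed

lemma LMlt_R_map: "envelope_gen G T \<Lambda> \<Longrightarrow> LMlt X (R_map X G T \<Lambda>) = G"
  unfolding LMlt_def envelope_gen_def Ltr_R_map_range .

lemma E_map_R_map: "E_map X T (R_map X G T \<Lambda>) = \<Lambda>"
  using Ltr_R_map[OF _ perm_subgroup_id[OF folder_perm_subgroup]] folder
  unfolding E_map_def rack_folder_def by fastforce

lemma quandle_R_map:
  assumes "quandle_folder X G T \<Lambda>" shows "quandle X (R_map X G T \<Lambda>)"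
  unfolding quandle_def
proof (intro conjI ballI rack_R_map)
  fix y assume "y \<in> X"
  then obtain x g where x: "x \<in> T" and g: "g \<in> G" and y: "y = g x"
    using orbit_reps_cover[OF reps] by blast
  have \<Lambda>_fixes: "\<Lambda> x x = x" using assms x unfolding quandle_folder_iff by blast
  have "R_map X G T \<Lambda> y y = conj_perm (\<Lambda> x) g (g x)"
    using R_map_orbit[OF x g, of y] \<open>y \<in> X\<close> y by simp
  also have "\<dots> = y"
    using conj_perm_fixes[of g X "\<Lambda> x" x, OF perm_subgroup_permutes[OF folder_perm_subgroup g]
        \<Lambda>_fixes] y
    by simp
  finally show "R_map X G T \<Lambda> y y = y" .
qed

end

context
  fixes X m T
  assumes rack: "rack X m" and reps: "orbit_reps X (LMlt X m) T"
begin

private lemmas conj_perm_Ltr_LMlt = conj_perm_Ltr_automorphism[OF automorphism_LMlt[OF rack]]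

lemma rack_folder_E_map: "rack_folder X (LMlt X m) T (E_map X T m)"
  unfolding rack_folder_def
proof (intro conjI ballI allI impI perm_subgroup_LMlt[OF rack])
  fix x assume "x \<in> T"
  then have x: "x \<in> X" using orbit_reps_subset[OF reps] by blast
  have "Ltr X m x \<circ> h = h \<circ> Ltr X m x" if "h \<in> stabilizer (LMlt X m) x" for h
  proof -
    have h: "h \<in> LMlt X m" "h x = x" using that unfolding stabilizer_def by auto
    then have "conj_perm (Ltr X m x) h = Ltr X m x" using conj_perm_Ltr_LMlt[OF _ x] by simp
    then show ?thesis
      using conj_perm_eq_self_iff permutes_bij
        perm_subgroup_permutes[OF perm_subgroup_LMlt[OF rack] h(1)]
      by blast
  qed
  then show "E_map X T m x \<in> centralizer (LMlt X m) (stabilizer (LMlt X m) x)"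
    using \<open>x \<in> T\<close> Ltr_in_LMlt[OF x] unfolding E_map_def centralizer_def by simp
qed (simp add: E_map_def)

lemma R_map_E_map: "R_map X (LMlt X m) T (E_map X T m) = m"
proof (intro ext)
  fix y z
  show "R_map X (LMlt X m) T (E_map X T m) y z = m y z"
  proof (cases "y \<in> X \<and> z \<in> X")
    case True
    then obtain x g where x: "x \<in> T" and g: "g \<in> LMlt X m" and y: "y = g x"
      using orbit_reps_cover[OF reps] by blast
    have "R_map X (LMlt X m) T (E_map X T m) y z = conj_perm (Ltr X m x) g z"
      using R_map_orbit[OF rack_folder_E_map reps x g] True x y unfolding E_map_def by simp
    then show ?thesis
      using conj_perm_Ltr_LMlt[OF g] orbit_reps_subset[OF reps] x y True by (auto simp: Ltr_eq)
  next
    case False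
    then show ?thesis
      using rack unfolding R_map_def rack_def left_quasigroup_def op_on_def by auto
  qed
qed

lemma envelope_gen_E_map: "envelope_gen (LMlt X m) T (E_map X T m)"
proof -
  have "(\<Union>x\<in>T. {conj_perm (E_map X T m x) g | g. g \<in> LMlt X m}) = {Ltr X m y | y. y \<in> X}"
    using Ltr_R_map_range[OF rack_folder_E_map reps] unfolding R_map_E_map by simp
  then show ?thesis unfolding envelope_gen_def LMlt_def by simp
qed

lemma quandle_folder_E_map: "quandle X m \<Longrightarrow> quandle_folder X (LMlt X m) T (E_map X T m)"
  unfolding quandle_folder_iff quandle_def
  using rack_folder_E_map orbit_reps_subset[OF reps] by (auto simp: E_map_def Ltr_eq)

end

theorem theorem3p4:
  fixes X :: "'a set" and G :: "('a \<Rightarrow> 'a) set" and T :: "'a set"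
  assumes "X \<noteq> {}" and "perm_subgroup X G" and "orbit_reps X G T"
  shows
    "(\<forall>m. rack X m \<and> LMlt X m = G \<longrightarrow>
          rack_envelope X G T (E_map X T m) \<and> R_map X G T (E_map X T m) = m)
   \<and> (\<forall>\<Lambda>. rack_envelope X G T \<Lambda> \<longrightarrow>
          rack X (R_map X G T \<Lambda>) \<and> LMlt X (R_map X G T \<Lambda>) = G
          \<and> E_map X T (R_map X G T \<Lambda>) = \<Lambda>)
   \<and> (\<forall>m. quandle X m \<and> LMlt X m = G \<longrightarrow>
          quandle_envelope X G T (E_map X T m) \<and> R_map X G T (E_map X T m) = m)
   \<and> (\<forall>\<Lambda>. quandle_envelope X G T \<Lambda> \<longrightarrow>
          quandle X (R_map X G T \<Lambda>) \<and> LMlt X (R_map X G T \<Lambda>) = G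
          \<and> E_map X T (R_map X G T \<Lambda>) = \<Lambda>)"
proof (intro conjI allI impI)
  fix m assume "rack X m \<and> LMlt X m = G"
  then show "rack_envelope X G T (E_map X T m)" "R_map X G T (E_map X T m) = m"
    using rack_folder_E_map envelope_gen_E_map R_map_E_map assms(3)
    unfolding rack_envelope_def by blast+
next
  fix m assume "quandle X m \<and> LMlt X m = G"
  then show "quandle_envelope X G T (E_map X T m)" "R_map X G T (E_map X T m) = m"
    using quandle_folder_E_map envelope_gen_E_map R_map_E_map assms(3)
    unfolding quandle_envelope_def quandle_def by blast+
next
  fix \<Lambda> assume "rack_envelope X G T \<Lambda>"
  then show "rack X (R_map X G T \<Lambda>)" "LMlt X (R_map X G T \<Lambda>) = G"
    "E_map X T (R_map X G T \<Lambda>) = \<Lambda>"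
    using rack_R_map LMlt_R_map E_map_R_map assms(3) unfolding rack_envelope_def by blast+
next
  fix \<Lambda> assume "quandle_envelope X G T \<Lambda>"
  then have "rack_folder X G T \<Lambda>" "quandle_folder X G T \<Lambda>" "envelope_gen G T \<Lambda>"
    unfolding quandle_envelope_def quandle_folder_iff by blast+
  then show "quandle X (R_map X G T \<Lambda>)" "LMlt X (R_map X G T \<Lambda>) = G"
    "E_map X T (R_map X G T \<Lambda>) = \<Lambda>"
    using quandle_R_map LMlt_R_map E_map_R_map assms(3) by blast+
qed

end
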